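(* For a tree $T$, $\lfloor \mathrm{sp}\rfloor(T)=|V(T)|-\mathrm{diam}(T)-1$.
   Context: All graphs are finite, have at least one vertex, have no loops, and may have multiple (parallel) edges. $\mathrm{diam}$ denotes the diameter (maximum distance between two vertices, distance measured in number of edges). A unique shortest path is a shortest $u$–$v$ path $P$ such that every $u$–$v$ path with the same number of vertices is identical to $P$, where two paths with different edge sequences are different even if their vertex sequences agree; a single vertex is a unique shortest path. The parade number $\mathrm{usp}(G)$ is the largest number of vertices of a unique shortest path in $G$. The spectator number is $\mathrm{sp}(G)=|V(G)|-\mathrm{usp}(G)$. A minor of $H$ is any graph obtained from $H$ by a sequence of: deleting an isolated vertex, deleting an edge, contracting an edge that has no edge parallel to it. The spectator floor $\lfloor \mathrm{sp}\rfloor(G)$ is the minimum of $\mathrm{sp}(H)$ over all graphs $H$ of which $G$ is a minor. *)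

theory Defs
  imports Main
begin

text \<open>Parallel edges are
  allowed (several edges with equal ends).\<close>

type_synonym ('v, 'e) mgraph = "'v set \<times> 'e set \<times> ('e \<Rightarrow> 'v set)"

definition verts :: "('v, 'e) mgraph \<Rightarrow> 'v set" where
  "verts G = fst G"
definition edges :: "('v, 'e) mgraph \<Rightarrow> 'e set" where
  "edges G = fst (snd G)"
definition endpts :: "('v, 'e) mgraph \<Rightarrow> 'e \<Rightarrow> 'v set" where
  "endpts G = snd (snd G)"

definition wf_graph :: "('v, 'e) mgraph \<Rightarrow> bool" where
  "wf_graph G \<longleftrightarrow> finite (verts G) \<and> verts G \<noteq> {} \<and> finite (edges G) \<and>
     (\<forall>e\<in>edges G. endpts G e \<subseteq> verts G \<and> card (endpts G e) = 2)"

definition is_walk :: "('v, 'e) mgraph \<Rightarrow> 'v list \<Rightarrow> 'e list \<Rightarrow> bool" where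
  "is_walk G vs es \<longleftrightarrow> vs \<noteq> [] \<and> set vs \<subseteq> verts G \<and> set es \<subseteq> edges G \<and>
     length vs = length es + 1 \<and>
     (\<forall>i < length es. endpts G (es ! i) = {vs ! i, vs ! Suc i})"

definition is_path :: "('v, 'e) mgraph \<Rightarrow> 'v list \<Rightarrow> 'e list \<Rightarrow> bool" where
  "is_path G vs es \<longleftrightarrow> is_walk G vs es \<and> distinct vs"

definition path_from_to :: "('v, 'e) mgraph \<Rightarrow> 'v \<Rightarrow> 'v \<Rightarrow> 'v list \<Rightarrow> 'e list \<Rightarrow> bool" where
  "path_from_to G u v vs es \<longleftrightarrow> is_path G vs es \<and> hd vs = u \<and> last vs = v"

text \<open>Unique shortest path: a shortest u-v path such that every u-v path with at most
  (hence the same) number of vertices is identical to it (same vertex and edge sequence).\<close>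
definition is_usp :: "('v, 'e) mgraph \<Rightarrow> 'v list \<Rightarrow> 'e list \<Rightarrow> bool" where
  "is_usp G vs es \<longleftrightarrow> path_from_to G (hd vs) (last vs) vs es \<and>
     (\<forall>vs' es'. path_from_to G (hd vs) (last vs) vs' es' \<and> length vs' \<le> length vs
        \<longrightarrow> vs' = vs \<and> es' = es)"

definition usp :: "('v, 'e) mgraph \<Rightarrow> nat" where
  "usp G = Max {length vs | vs es. is_usp G vs es}"

definition sp :: "('v, 'e) mgraph \<Rightarrow> nat" where
  "sp G = card (verts G) - usp G"

definition gdist :: "('v, 'e) mgraph \<Rightarrow> 'v \<Rightarrow> 'v \<Rightarrow> nat" where
  "gdist G u v = (LEAST k. \<exists>vs es. is_walk G vs es \<and> hd vs = u \<and> last vs = v \<and> length es = k)"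

definition diam :: "('v, 'e) mgraph \<Rightarrow> nat" where
  "diam G = Max {gdist G u v | u v. u \<in> verts G \<and> v \<in> verts G}"

definition connected_graph :: "('v, 'e) mgraph \<Rightarrow> bool" where
  "connected_graph G \<longleftrightarrow> (\<forall>u\<in>verts G. \<forall>v\<in>verts G.
     \<exists>vs es. is_walk G vs es \<and> hd vs = u \<and> last vs = v)"

text \<open>A cycle: a path with at least one edge closed up by a further edge (not on the
  path) joining its endpoints; parallel edges thus form cycles of length 2.\<close>
definition has_cycle :: "('v, 'e) mgraph \<Rightarrow> bool" where
  "has_cycle G \<longleftrightarrow> (\<exists>vs es e. is_path G vs es \<and> es \<noteq> [] \<and> e \<in> edges G \<and> e \<notin> set es \<and>
     endpts G e = {hd vs, last vs})"

definition is_tree :: "('v, 'e) mgraph \<Rightarrow> bool" where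
  "is_tree G \<longleftrightarrow> wf_graph G \<and> connected_graph G \<and> \<not> has_cycle G"

definition minor_step :: "('v, 'e) mgraph \<Rightarrow> ('v, 'e) mgraph \<Rightarrow> bool" where
  "minor_step H H' \<longleftrightarrow>
     (\<exists>x\<in>verts H. (\<forall>e\<in>edges H. x \<notin> endpts H e) \<and>
        H' = (verts H - {x}, edges H, endpts H)) \<or>
     (\<exists>e\<in>edges H. H' = (verts H, edges H - {e}, endpts H)) \<or>
     (\<exists>e\<in>edges H. \<exists>u v. endpts H e = {u, v} \<and> u \<noteq> v \<and>
        (\<forall>f\<in>edges H. f \<noteq> e \<longrightarrow> endpts H f \<noteq> endpts H e) \<and>
        H' = (verts H - {v}, edges H - {e},
              \<lambda>f. (\<lambda>w. if w = v then u else w) ` endpts H f))"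

definition graph_iso :: "('v, 'e) mgraph \<Rightarrow> ('w, 'f) mgraph \<Rightarrow> bool" where
  "graph_iso G H \<longleftrightarrow> (\<exists>\<phi> \<psi>. bij_betw \<phi> (verts G) (verts H) \<and> bij_betw \<psi> (edges G) (edges H) \<and>
     (\<forall>e\<in>edges G. endpts H (\<psi> e) = \<phi> ` endpts G e))"

definition is_minor :: "('v, 'e) mgraph \<Rightarrow> ('w, 'f) mgraph \<Rightarrow> bool" where
  "is_minor G H \<longleftrightarrow> (\<exists>H'. (\<lambda>A B. minor_step A B \<and> wf_graph B)\<^sup>*\<^sup>* H H' \<and> graph_iso G H')"

text \<open>Spectator floor; the host graphs H range over all finite graphs, represented
  (up to isomorphism) with natural-number vertices and edges.\<close>
definition spec_floor :: "('v, 'e) mgraph \<Rightarrow> nat" where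
  "spec_floor G = (LEAST s. \<exists>H :: (nat, nat) mgraph. wf_graph H \<and> is_minor G H \<and> s = sp H)"

end

theory Submission
  imports Defs
begin

text \<open>
  Call a graph \<open>K\<close>-slack if it has a component \<open>C\<close> in which every geodesic starting in \<open>C\<close>
  misses at least \<open>K\<close> vertices of \<open>C\<close>. A unique shortest path is a geodesic, so a \<open>K\<close>-slack
  graph has spectator number at least \<open>K\<close>. Slackness is inherited from a minor by the graph it was
  taken from: geodesics of the big graph through a deleted edge split into two geodesics of the
  small graph in different components, and geodesics of a contracted graph lift to walks that are
  at most one edge longer, the extra edge being paid for by the vertex that was merged away. A
  tree \<open>T\<close> is \<open>(|V(T)| - diam(T) - 1)\<close>-slack, hence so is every host of \<open>T\<close>. Conversely, paths in a
  tree are unique, so a diametral path of \<open>T\<close> is a unique shortest path with \<open>diam(T) + 1\<close>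
  vertices, and a copy of \<open>T\<close> itself is a host attaining the bound.
\<close>

section \<open>Walks and components\<close>

lemma mgraph_simps [simp]:
  "verts (V, E, f) = V" "edges (V, E, f) = E" "endpts (V, E, f) = f"
  by (simp_all add: verts_def edges_def endpts_def)

fun walk :: "('v, 'e) mgraph \<Rightarrow> 'v list \<Rightarrow> 'e list \<Rightarrow> bool" where
  "walk G [x] [] \<longleftrightarrow> x \<in> verts G"
| "walk G (x # y # vs) (e # es) \<longleftrightarrow>
     x \<in> verts G \<and> e \<in> edges G \<and> endpts G e = {x, y} \<and> walk G (y # vs) es"
| "walk G _ _ \<longleftrightarrow> False"

lemma is_walk_iff_walk: "is_walk G vs es \<longleftrightarrow> walk G vs es"
  by (induction G vs es rule: walk.induct) (auto simp: is_walk_def All_less_Suc2)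

lemma walk_length: "walk G vs es \<Longrightarrow> length vs = Suc (length es)"
  by (induction G vs es rule: walk.induct) auto

lemma walk_not_Nil: "walk G vs es \<Longrightarrow> vs \<noteq> []"
  by (induction G vs es rule: walk.induct) auto

lemma walk_verts: "walk G vs es \<Longrightarrow> set vs \<subseteq> verts G"
  by (induction G vs es rule: walk.induct) auto

lemma walk_edges: "walk G vs es \<Longrightarrow> set es \<subseteq> edges G"
  by (induction G vs es rule: walk.induct) auto

lemma walk_endpts: "walk G vs es \<Longrightarrow> f \<in> set es \<Longrightarrow> endpts G f \<subseteq> set vs"
  by (induction G vs es rule: walk.induct) auto

lemma walk_singleton [simp]: "walk G [x] es \<longleftrightarrow> es = [] \<and> x \<in> verts G"
  by (cases es) auto

lemma walk_Cons:
  "walk G vs es \<Longrightarrow> x \<in> verts G \<Longrightarrow> f \<in> edges G \<Longrightarrow> endpts G f = {x, hd vs} \<Longrightarrow>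
   walk G (x # vs) (f # es)"
  by (cases vs) (auto dest: walk_not_Nil)

lemma walk_append_edge:
  assumes "length vs1 = Suc (length es1)"
  shows "walk G (vs1 @ vs2) (es1 @ e # es2) \<longleftrightarrow>
    walk G vs1 es1 \<and> walk G vs2 es2 \<and> e \<in> edges G \<and> endpts G e = {last vs1, hd vs2}"
  using assms
proof (induction vs1 es1 rule: list_induct2')
  case (2 x vs1)
  then show ?case by (cases vs2) (auto dest: walk_not_Nil)
next
  case (4 x vs1 f es1)
  then show ?case by (cases vs1) (auto dest: walk_not_Nil)
qed auto

lemma walk_append:
  "walk G vs1 es1 \<Longrightarrow> walk G vs2 es2 \<Longrightarrow> last vs1 = hd vs2 \<Longrightarrow>
   walk G (vs1 @ tl vs2) (es1 @ es2)"
proof (induction G vs1 es1 rule: walk.induct)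
  case (1 G x)
  then show ?case by (cases vs2) auto
qed auto

lemma walk_rev: "walk G vs es \<Longrightarrow> walk G (rev vs) (rev es)"
proof (induction G vs es rule: walk.induct)
  case (2 G x y vs e es)
  then show ?case
    using walk_append_edge[of "rev vs @ [y]" "rev es" G "[x]" e "[]"] walk_length[of G "rev vs @ [y]"]
    by (simp add: insert_commute)
qed auto

lemma walk_drop: "walk G vs es \<Longrightarrow> k < length vs \<Longrightarrow> walk G (drop k vs) (drop k es)"
proof (induction G vs es arbitrary: k rule: walk.induct)
  case (2 G x y vs e es)
  then show ?case by (cases k) simp_all
qed auto

lemma walk_distinct_edges: "walk G vs es \<Longrightarrow> distinct vs \<Longrightarrow> distinct es"
proof (induction G vs es rule: walk.induct)
  case (2 G x y vs e es)
  then have "e \<notin> set es"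
    using walk_endpts[of G "y # vs" es e] by auto
  with 2 show ?case by simp
qed auto

lemma walk_to_path:
  assumes "walk G vs es"
  obtains ps fs where "walk G ps fs" "distinct ps" "hd ps = hd vs" "last ps = last vs"
    "set fs \<subseteq> set es" "length fs \<le> length es"
  using assms
proof (induction G vs es arbitrary: thesis rule: walk.induct)
  case (1 G x)
  then show ?case by (intro "1.prems"(1)[of "[x]" "[]"]) auto
next
  case (2 G x y vs e es)
  obtain ps fs where p: "walk G ps fs" "distinct ps" "hd ps = y" "last ps = last (y # vs)"
    "set fs \<subseteq> set es" "length fs \<le> length es"
    using 2 by auto
  show ?case
  proof (cases "x \<in> set ps")
    case False
    have "walk G (x # ps) (e # fs)"
      using p(1,3) 2 by (intro walk_Cons) auto
    with p False walk_not_Nil[OF p(1)] show ?thesis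
      by (intro "2.prems"(1)[of "x # ps" "e # fs"]) auto
  next
    case True
    then obtain k where k: "k < length ps" "ps ! k = x" by (metis in_set_conv_nth)
    have "walk G (drop k ps) (drop k fs)" using p(1) k(1) by (rule walk_drop)
    moreover have "hd (drop k ps) = x" using k by (simp add: hd_drop_conv_nth)
    moreover have "last (drop k ps) = last ps" using k(1) by simp
    moreover have "set (drop k fs) \<subseteq> set fs" by (rule set_drop_subset)
    ultimately show ?thesis using p
      by (intro "2.prems"(1)[of "drop k ps" "drop k fs"]) auto
  qed
qed auto

definition reach :: "('v, 'e) mgraph \<Rightarrow> 'v \<Rightarrow> 'v \<Rightarrow> bool" where
  "reach G x y \<longleftrightarrow> (\<exists>vs es. walk G vs es \<and> hd vs = x \<and> last vs = y)"

definition component :: "('v, 'e) mgraph \<Rightarrow> 'v \<Rightarrow> 'v set" where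
  "component G x = {y. reach G x y}"

lemma reachI: "walk G vs es \<Longrightarrow> reach G (hd vs) (last vs)"
  unfolding reach_def by blast

lemma reach_refl: "x \<in> verts G \<Longrightarrow> reach G x x"
  using reachI[of G "[x]" "[]"] by simp

lemma reach_edge:
  "e \<in> edges G \<Longrightarrow> endpts G e = {x, y} \<Longrightarrow> x \<in> verts G \<Longrightarrow> y \<in> verts G \<Longrightarrow> reach G x y"
  using reachI[of G "[x, y]" "[e]"] by simp

lemma reach_sym: "reach G x y \<Longrightarrow> reach G y x"
  unfolding reach_def by (metis walk_rev hd_rev last_rev)

lemma hd_last_append_tl:
  "xs \<noteq> [] \<Longrightarrow> ys \<noteq> [] \<Longrightarrow> last xs = hd ys \<Longrightarrow>
   hd (xs @ tl ys) = hd xs \<and> last (xs @ tl ys) = last ys"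
  by (cases ys) auto

lemma reach_trans:
  assumes "reach G x y" "reach G y z"
  shows "reach G x z"
proof -
  obtain vs es ws fs where
    w: "walk G vs es" "hd vs = x" "last vs = y" "walk G ws fs" "hd ws = y" "last ws = z"
    using assms unfolding reach_def by blast
  then show ?thesis
    using reachI[OF walk_append[OF w(1,4)]] hd_last_append_tl[of vs ws]
      walk_not_Nil[OF w(1)] walk_not_Nil[OF w(4)] by simp
qed

lemma reach_verts: "reach G x y \<Longrightarrow> x \<in> verts G \<and> y \<in> verts G"
  unfolding reach_def by (metis walk_verts walk_not_Nil hd_in_set last_in_set subsetD)

lemma component_subset_verts: "component G x \<subseteq> verts G"
  unfolding component_def using reach_verts by fastforce

lemma self_in_component: "x \<in> verts G \<Longrightarrow> x \<in> component G x"
  unfolding component_def by (simp add: reach_refl)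

lemma walk_subset_component: "walk G vs es \<Longrightarrow> set vs \<subseteq> component G (hd vs)"
proof (induction G vs es rule: walk.induct)
  case (2 G x y vs e es)
  then have "reach G x y"
    using reachI[of G "[x, y]" "[e]"] walk_verts[of G "y # vs" es] by auto
  with 2 show ?case
    unfolding component_def by (auto intro: reach_refl reach_trans)
qed (auto simp: component_def reach_refl)

lemma component_eq: "y \<in> component G x \<Longrightarrow> component G y = component G x"
  unfolding component_def by (auto intro: reach_sym reach_trans)

lemma components_disjoint:
  assumes "component G x \<noteq> component G y"
  shows "component G x \<inter> component G y = {}"
proof (rule equals0I)
  fix z assume "z \<in> component G x \<inter> component G y"
  then show False using assms component_eq[of z G x] component_eq[of z G y] by auto
qed

lemma gdist_le: "walk G vs es \<Longrightarrow> gdist G (hd vs) (last vs) \<le> length es"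
  unfolding gdist_def is_walk_iff_walk by (rule Least_le) blast

lemma shortest_walk_exists:
  assumes "reach G x y"
  obtains vs es where "walk G vs es" "hd vs = x" "last vs = y" "length es = gdist G x y"
proof -
  have "\<exists>vs es. walk G vs es \<and> hd vs = x \<and> last vs = y \<and> length es = gdist G x y"
    unfolding gdist_def is_walk_iff_walk
    by (rule LeastI_ex) (use assms in \<open>auto simp: reach_def\<close>)
  with that show thesis by blast
qed

definition geodesic :: "('v, 'e) mgraph \<Rightarrow> 'v list \<Rightarrow> 'e list \<Rightarrow> bool" where
  "geodesic G vs es \<longleftrightarrow> walk G vs es \<and> distinct vs \<and> length es = gdist G (hd vs) (last vs)"

lemma geodesic_exists:
  assumes "reach G x y"
  obtains vs es where "geodesic G vs es" "hd vs = x" "last vs = y"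
proof -
  obtain ws fs where w: "walk G ws fs" "hd ws = x" "last ws = y" "length fs = gdist G x y"
    using assms by (rule shortest_walk_exists)
  then obtain vs es where "walk G vs es" "distinct vs" "hd vs = x" "last vs = y"
    "length es \<le> gdist G x y"
    by (metis walk_to_path)
  with gdist_le[of G vs es] show thesis
    by (intro that[of vs es]) (auto simp: geodesic_def)
qed

lemma geodesic_singleton: "x \<in> verts G \<Longrightarrow> geodesic G [x] []"
  unfolding geodesic_def using gdist_le[of G "[x]" "[]"] by simp

lemma geodesic_length_le_card:
  assumes "finite (verts G)" "geodesic G vs es"
  shows "length vs \<le> card (component G (hd vs))"
proof -
  have "set vs \<subseteq> component G (hd vs)" "distinct vs"
    using assms(2) walk_subset_component unfolding geodesic_def by blast+
  then show ?thesis
    using assms(1) component_subset_verts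
    by (metis card_mono distinct_card finite_subset)
qed

lemma gdist_append_edge_le:
  assumes "walk G (vs1 @ vs2) (es1 @ e # es2)" "length vs1 = Suc (length es1)"
  shows "gdist G (hd vs1) (last vs2) \<le> gdist G (hd vs1) (last vs1) + 1 + gdist G (hd vs2) (last vs2)"
proof -
  have w: "walk G vs1 es1" "walk G vs2 es2" "e \<in> edges G" "endpts G e = {last vs1, hd vs2}"
    using assms(1) unfolding walk_append_edge[OF assms(2)] by blast+
  obtain ws1 fs1 where w1: "walk G ws1 fs1" "hd ws1 = hd vs1" "last ws1 = last vs1"
    "length fs1 = gdist G (hd vs1) (last vs1)"
    using reachI[OF w(1)] by (rule shortest_walk_exists)
  obtain ws2 fs2 where w2: "walk G ws2 fs2" "hd ws2 = hd vs2" "last ws2 = last vs2"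
    "length fs2 = gdist G (hd vs2) (last vs2)"
    using reachI[OF w(2)] by (rule shortest_walk_exists)
  have "walk G (ws1 @ ws2) (fs1 @ e # fs2)"
    using w w1 w2 walk_append_edge[OF walk_length[OF w1(1)]] by simp
  from gdist_le[OF this] show ?thesis
    using w1 w2 walk_not_Nil[OF w1(1)] walk_not_Nil[OF w2(1)] by simp
qed

lemma geodesic_split:
  assumes g: "geodesic G vs es" and e: "e \<in> set es"
  obtains vs1 vs2 es1 es2 where "vs = vs1 @ vs2" "es = es1 @ e # es2"
    "geodesic G vs1 es1" "geodesic G vs2 es2" "e \<notin> set es1" "e \<notin> set es2"
proof -
  have w: "walk G vs es" "distinct vs" "length es = gdist G (hd vs) (last vs)"
    using g unfolding geodesic_def by blast+
  obtain es1 es2 where es: "es = es1 @ e # es2" using e by (meson split_list)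
  define vs1 where "vs1 = take (Suc (length es1)) vs"
  define vs2 where "vs2 = drop (Suc (length es1)) vs"
  have vs: "vs = vs1 @ vs2" and len: "length vs1 = Suc (length es1)"
    using walk_length[OF w(1)] es by (simp_all add: vs1_def vs2_def)
  have w12: "walk G vs1 es1" "walk G vs2 es2"
    using w(1) walk_append_edge[OF len] unfolding vs es by blast+
  have ne: "vs1 \<noteq> []" "vs2 \<noteq> []" using w12 walk_not_Nil by blast+
  have "length es \<le> gdist G (hd vs1) (last vs1) + 1 + gdist G (hd vs2) (last vs2)"
    using w(1,3) gdist_append_edge_le[OF _ len] ne unfolding vs es by simp
  moreover have "gdist G (hd vs1) (last vs1) \<le> length es1" "gdist G (hd vs2) (last vs2) \<le> length es2"
    using w12 by (simp_all add: gdist_le)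
  ultimately have "geodesic G vs1 es1" "geodesic G vs2 es2"
    using w12 w(2) es unfolding vs geodesic_def by auto
  moreover have "e \<notin> set es1" "e \<notin> set es2"
    using walk_distinct_edges[OF w(1,2)] es by auto
  ultimately show thesis using that vs es by blast
qed

definition subgraph :: "('v, 'e) mgraph \<Rightarrow> ('v, 'e) mgraph \<Rightarrow> bool" where
  "subgraph H G \<longleftrightarrow> verts H \<subseteq> verts G \<and> edges H \<subseteq> edges G \<and>
     (\<forall>e\<in>edges H. endpts H e = endpts G e)"

lemma walk_subgraph: "subgraph H G \<Longrightarrow> walk H vs es \<Longrightarrow> walk G vs es"
  by (induction H vs es rule: walk.induct) (auto simp: subgraph_def)

lemma reach_subgraph:
  assumes "subgraph H G" "reach H x y"
  shows "reach G x y"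
proof -
  obtain vs es where "walk H vs es" "hd vs = x" "last vs = y"
    using assms(2) unfolding reach_def by blast
  then show ?thesis using reachI[OF walk_subgraph[OF assms(1)]] by blast
qed

lemma component_subgraph:
  assumes "subgraph H G" "y \<in> component G x"
  shows "component H y \<subseteq> component G x"
proof
  fix z assume "z \<in> component H y"
  with assms show "z \<in> component G x"
    unfolding component_def by (metis mem_Collect_eq reach_subgraph reach_trans)
qed

lemma gdist_subgraph: "subgraph H G \<Longrightarrow> reach H x y \<Longrightarrow> gdist G x y \<le> gdist H x y"
  by (metis shortest_walk_exists gdist_le walk_subgraph)

lemma geodesic_subgraph:
  "subgraph H G \<Longrightarrow> geodesic G vs es \<Longrightarrow> walk H vs es \<Longrightarrow> geodesic H vs es"
  unfolding geodesic_def by (metis le_antisym gdist_le gdist_subgraph reachI)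

lemma is_usp_iff:
  "is_usp G vs es \<longleftrightarrow> walk G vs es \<and> distinct vs \<and>
     (\<forall>vs' es'. walk G vs' es' \<and> distinct vs' \<and> hd vs' = hd vs \<and> last vs' = last vs \<and>
        length vs' \<le> length vs \<longrightarrow> vs' = vs \<and> es' = es)"
  unfolding is_usp_def path_from_to_def is_path_def is_walk_iff_walk by blast

lemma is_usp_geodesic:
  assumes "is_usp G vs es"
  shows "geodesic G vs es"
proof -
  have w: "walk G vs es" "distinct vs" using assms unfolding is_usp_iff by blast+
  obtain ps fs where p: "geodesic G ps fs" "hd ps = hd vs" "last ps = last vs"
    using reachI[OF w(1)] by (rule geodesic_exists)
  have "length fs \<le> length es"
    using p(1) gdist_le[OF w(1)] p(2,3) unfolding geodesic_def by simp
  then have "length ps \<le> length vs"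
    using walk_length[OF w(1)] walk_length p(1) unfolding geodesic_def by fastforce
  then have "ps = vs \<and> fs = es"
    using assms p unfolding is_usp_iff geodesic_def by blast
  with p(1) show ?thesis by simp
qed

lemma is_usp_singleton:
  assumes "x \<in> verts G"
  shows "is_usp G [x] []"
  unfolding is_usp_iff
proof (intro conjI allI impI)
  fix vs es
  assume "walk G vs es \<and> distinct vs \<and> hd vs = hd [x] \<and> last vs = last [x] \<and>
    length vs \<le> length [x]"
  then show "vs = [x]" "es = []" using walk_length[of G vs es] by (cases vs; simp)+
qed (use assms in simp_all)

lemma finite_usp_lengths:
  assumes "wf_graph G"
  shows "finite {length vs | vs es. is_usp G vs es}"
proof (rule finite_subset)
  have fin: "finite (verts G)" using assms by (simp add: wf_graph_def)
  show "{length vs | vs es. is_usp G vs es} \<subseteq> {..card (verts G)}"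
  proof
    fix n assume "n \<in> {length vs | vs es. is_usp G vs es}"
    then obtain vs es where "walk G vs es" "distinct vs" "n = length vs"
      unfolding is_usp_iff by blast
    then show "n \<in> {..card (verts G)}"
      using card_mono[OF fin walk_verts] distinct_card by fastforce
  qed
qed simp

lemma usp_ge: "wf_graph G \<Longrightarrow> is_usp G vs es \<Longrightarrow> length vs \<le> usp G"
  unfolding usp_def by (rule Max_ge[OF finite_usp_lengths]) blast+

lemma usp_attained:
  assumes "wf_graph G"
  shows "\<exists>vs es. is_usp G vs es \<and> length vs = usp G"
proof -
  obtain x where "x \<in> verts G" using assms unfolding wf_graph_def by auto
  then have u: "is_usp G [x] []" by (rule is_usp_singleton)
  have "length [x] \<in> {length vs | vs es. is_usp G vs es}"
    by (rule CollectI, rule exI[of _ "[x]"], rule exI[of _ "[]"]) (simp add: u)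
  then have "usp G \<in> {length vs | vs es. is_usp G vs es}"
    unfolding usp_def using finite_usp_lengths[OF assms] by (intro Max_in) auto
  then show ?thesis by auto
qed

lemma finite_component: "finite (verts G) \<Longrightarrow> finite (component G x)"
  using component_subset_verts by (rule finite_subset)

lemma walk_hd_in_component: "walk G vs es \<Longrightarrow> hd vs \<in> component G (hd vs)"
  using walk_subset_component walk_not_Nil hd_in_set by blast

section \<open>The slack invariant\<close>

definition slack_at :: "nat \<Rightarrow> ('v, 'e) mgraph \<Rightarrow> 'v \<Rightarrow> bool" where
  "slack_at K G x \<longleftrightarrow> (\<forall>vs es. geodesic G vs es \<and> hd vs \<in> component G x \<longrightarrow>
     length vs + K \<le> card (component G x))"

definition has_slack :: "nat \<Rightarrow> ('v, 'e) mgraph \<Rightarrow> bool" where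
  "has_slack K G \<longleftrightarrow> (\<exists>x\<in>verts G. slack_at K G x)"

lemma slack_atI:
  "(\<And>vs es. geodesic G vs es \<Longrightarrow> hd vs \<in> component G x \<Longrightarrow>
     length vs + K \<le> card (component G x)) \<Longrightarrow> slack_at K G x"
  unfolding slack_at_def by blast

lemma slack_atD:
  "slack_at K G x \<Longrightarrow> geodesic G vs es \<Longrightarrow> hd vs \<in> component G x \<Longrightarrow>
   length vs + K \<le> card (component G x)"
  unfolding slack_at_def by blast

text \<open>A geodesic starting outside the component of \<open>x\<close> is disjoint from it, and that component
  has at least \<open>K + 1\<close> vertices by the one-vertex geodesic at \<open>x\<close>.\<close>

lemma slack_at_union_bound:
  assumes fin: "finite (verts G)" and x: "x \<in> verts G" and s: "slack_at K G x"
    and P: "geodesic G vs es"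
  shows "length vs + K \<le> card (component G x \<union> component G (hd vs))"
proof (cases "component G (hd vs) = component G x")
  case True
  then have "hd vs \<in> component G x"
    using walk_hd_in_component P unfolding geodesic_def by metis
  with s P True show ?thesis by (simp add: slack_atD)
next
  case False
  have "1 + K \<le> card (component G x)"
    using slack_atD[OF s geodesic_singleton[OF x]] self_in_component[OF x] by simp
  moreover have "length vs \<le> card (component G (hd vs))"
    using geodesic_length_le_card[OF fin P] .
  moreover have "component G x \<inter> component G (hd vs) = {}"
    using components_disjoint[OF False] by blast
  then have "card (component G x \<union> component G (hd vs)) =
      card (component G x) + card (component G (hd vs))"
    using finite_component[OF fin] by (simp add: card_Un_disjoint)
  ultimately show ?thesis by linarith
qed

lemma slack_at_two_geodesics_bound:
  assumes fin: "finite (verts G)" and x: "x \<in> verts G" and s: "slack_at K G x"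
    and P: "geodesic G vs es" and Q: "geodesic G ws fs"
    and ne: "component G (hd vs) \<noteq> component G (hd ws)"
  shows "length vs + length ws + K \<le>
    card (component G x \<union> component G (hd vs) \<union> component G (hd ws))"
proof -
  let ?C = "component G x" and ?A = "component G (hd vs)" and ?B = "component G (hd ws)"
  have finite: "finite ?C" "finite ?A" "finite ?B" using finite_component[OF fin] by blast+
  have AB: "?A \<inter> ?B = {}" using components_disjoint[OF ne] .
  show ?thesis
  proof (cases "?B = ?C")
    case True
    have "length ws + K \<le> card ?C" using slack_at_union_bound[OF fin x s Q] True by simp
    moreover have "length vs \<le> card ?A" using geodesic_length_le_card[OF fin P] .
    moreover have "card (?C \<union> ?A \<union> ?B) = card ?C + card ?A"
      using True AB finite by (simp add: Un_commute card_Un_disjoint Int_commute)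
    ultimately show ?thesis by linarith
  next
    case False
    have "length vs + K \<le> card (?C \<union> ?A)" using slack_at_union_bound[OF fin x s P] .
    moreover have "length ws \<le> card ?B" using geodesic_length_le_card[OF fin Q] .
    moreover have "card (?C \<union> ?A \<union> ?B) = card (?C \<union> ?A) + card ?B"
      using components_disjoint[OF False] AB finite by (intro card_Un_disjoint) auto
    ultimately show ?thesis by linarith
  qed
qed

lemma slack_at_subgraph_bound:
  assumes sub: "subgraph H G" and fin: "finite (verts G)" and x: "x \<in> verts H"
    and s: "slack_at K H x" and P: "geodesic H vs es" and a: "hd vs \<in> component G x"
  shows "length vs + K \<le> card (component G x)"
proof -
  have HG: "verts H \<subseteq> verts G" using sub unfolding subgraph_def by blast
  have "length vs + K \<le> card (component H x \<union> component H (hd vs))"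
    using slack_at_union_bound[OF finite_subset[OF HG fin] x s P] .
  also have "\<dots> \<le> card (component G x)"
    using component_subgraph[OF sub] self_in_component[of x G] x HG a
    by (intro card_mono finite_component[OF fin]) blast
  finally show ?thesis .
qed

lemma slack_at_subgraph_reach_bound:
  assumes sub: "subgraph H G" and fin: "finite (verts G)" and x: "x \<in> verts H"
    and s: "slack_at K H x" and P: "geodesic G vs es" and a: "hd vs \<in> component G x"
    and r: "reach H (hd vs) (last vs)"
  shows "length vs + K \<le> card (component G x)"
proof -
  obtain ws fs where Q: "geodesic H ws fs" "hd ws = hd vs" "last ws = last vs"
    using r by (rule geodesic_exists)
  have w: "walk G vs es" "walk H ws fs" using P Q(1) unfolding geodesic_def by blast+
  have "length es \<le> length fs"
    using gdist_subgraph[OF sub r] P Q unfolding geodesic_def by simp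
  then have "length vs \<le> length ws" using walk_length[OF w(1)] walk_length[OF w(2)] by simp
  moreover have "length ws + K \<le> card (component G x)"
    using slack_at_subgraph_bound[OF sub fin x s Q(1)] Q(2) a by simp
  ultimately show ?thesis by simp
qed

lemma has_slack_le_sp:
  assumes wf: "wf_graph G" and slack: "has_slack K G"
  shows "K \<le> sp G"
proof -
  obtain x where x: "x \<in> verts G" "slack_at K G x" using slack unfolding has_slack_def by blast
  obtain vs es where u: "is_usp G vs es" "length vs = usp G" using usp_attained[OF wf] by auto
  have fin: "finite (verts G)" using wf by (simp add: wf_graph_def)
  have "usp G + K \<le> card (component G x \<union> component G (hd vs))"
    using slack_at_union_bound[OF fin x is_usp_geodesic[OF u(1)]] u(2) by simp
  also have "\<dots> \<le> card (verts G)"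
    by (intro card_mono fin Un_least component_subset_verts)
  finally show ?thesis unfolding sp_def by simp
qed

section \<open>Minor operations\<close>

lemma walk_isolated:
  "walk G vs es \<Longrightarrow> x \<in> set vs \<Longrightarrow> \<forall>e\<in>edges G. x \<notin> endpts G e \<Longrightarrow> vs = [x]"
  by (induction G vs es rule: walk.induct) auto

lemma reach_isolated:
  assumes "\<forall>e\<in>edges G. x \<notin> endpts G e" "reach G y x"
  shows "y = x"
proof -
  obtain vs es where w: "walk G vs es" "hd vs = y" "last vs = x"
    using assms(2) unfolding reach_def by blast
  have "x \<in> set vs" using last_in_set[OF walk_not_Nil[OF w(1)]] w(3) by simp
  with walk_isolated[OF w(1) _ assms(1)] w(2) show ?thesis by simp
qed

lemma subgraph_delete_vertex: "subgraph (verts G - {x}, edges G, endpts G) G"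
  by (simp add: subgraph_def)

lemma subgraph_delete_edge: "subgraph (verts G, edges G - {e}, endpts G) G"
  by (simp add: subgraph_def)

lemma walk_delete_vertex:
  "walk G vs es \<Longrightarrow> x \<notin> set vs \<Longrightarrow> walk (verts G - {x}, edges G, endpts G) vs es"
  by (induction G vs es rule: walk.induct) auto

lemma walk_delete_edge:
  "walk G vs es \<Longrightarrow> e \<notin> set es \<Longrightarrow> walk (verts G, edges G - {e}, endpts G) vs es"
  by (induction G vs es rule: walk.induct) auto

lemma has_slack_delete_vertex:
  assumes fin: "finite (verts G)" and isolated: "\<forall>e\<in>edges G. x \<notin> endpts G e"
    and slack: "has_slack K (verts G - {x}, edges G, endpts G)"
  shows "has_slack K G"
proof -
  let ?H = "(verts G - {x}, edges G, endpts G)"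
  obtain x0 where x0: "x0 \<in> verts ?H" "slack_at K ?H x0"
    using slack unfolding has_slack_def by blast
  have "slack_at K G x0"
  proof (rule slack_atI)
    fix vs es assume P: "geodesic G vs es" and a: "hd vs \<in> component G x0"
    have "set vs \<subseteq> component G x0"
      using walk_subset_component[of G vs es] component_eq[OF a] P unfolding geodesic_def by simp
    moreover have "x \<notin> component G x0"
      using reach_isolated[OF isolated] x0(1) unfolding component_def by auto
    ultimately have "x \<notin> set vs" by blast
    then have "walk ?H vs es"
      using P walk_delete_vertex[of G vs es x] unfolding geodesic_def by blast
    then have "geodesic ?H vs es" by (rule geodesic_subgraph[OF subgraph_delete_vertex P])
    then show "length vs + K \<le> card (component G x0)"
      by (rule slack_at_subgraph_bound[OF subgraph_delete_vertex fin x0 _ a])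
  qed
  with x0 show ?thesis unfolding has_slack_def by auto
qed

lemma geodesic_split_delete_edge:
  assumes P: "geodesic G vs es"
    and not_reach: "\<not> reach (verts G, edges G - {e}, endpts G) (hd vs) (last vs)"
  obtains vs1 vs2 es1 es2 where "vs = vs1 @ vs2"
    "geodesic (verts G, edges G - {e}, endpts G) vs1 es1"
    "geodesic (verts G, edges G - {e}, endpts G) vs2 es2"
    "component (verts G, edges G - {e}, endpts G) (hd vs1) \<noteq>
     component (verts G, edges G - {e}, endpts G) (hd vs2)"
proof -
  let ?H = "(verts G, edges G - {e}, endpts G)"
  have "e \<in> set es"
    using reachI[OF walk_delete_edge[of G vs es e]] P not_reach unfolding geodesic_def by blast
  then obtain vs1 vs2 es1 es2 where split: "vs = vs1 @ vs2" "es = es1 @ e # es2"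
    "geodesic G vs1 es1" "geodesic G vs2 es2" "e \<notin> set es1" "e \<notin> set es2"
    by (rule geodesic_split[OF P])
  have Q: "geodesic ?H vs1 es1" "geodesic ?H vs2 es2"
    using split(3-6) walk_delete_edge[of G vs1 es1 e] walk_delete_edge[of G vs2 es2 e]
      geodesic_subgraph[OF subgraph_delete_edge[of G e]] unfolding geodesic_def by blast+
  have ne: "vs1 \<noteq> []" "vs2 \<noteq> []" using Q walk_not_Nil unfolding geodesic_def by blast+
  have "component ?H (hd vs1) \<noteq> component ?H (hd vs2)"
  proof
    assume "component ?H (hd vs1) = component ?H (hd vs2)"
    then have "reach ?H (hd vs1) (hd vs2)"
      using walk_hd_in_component[of ?H vs2 es2] Q(2) unfolding geodesic_def component_def
      by auto
    then have "reach ?H (hd vs) (last vs)"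
      using reach_trans reachI[of ?H vs2 es2] Q(2) split(1) ne unfolding geodesic_def by auto
    with not_reach show False ..
  qed
  with split(1) Q show thesis by (rule that)
qed

lemma has_slack_delete_edge:
  assumes fin: "finite (verts G)" and slack: "has_slack K (verts G, edges G - {e}, endpts G)"
  shows "has_slack K G"
proof -
  let ?H = "(verts G, edges G - {e}, endpts G)"
  note sub = subgraph_delete_edge[of G e]
  obtain x where x: "x \<in> verts ?H" "slack_at K ?H x" using slack unfolding has_slack_def by blast
  let ?C = "component G x"
  have "slack_at K G x"
  proof (rule slack_atI)
    fix vs es assume P: "geodesic G vs es" and a: "hd vs \<in> ?C"
    have in_C: "component ?H z \<subseteq> ?C" if "z \<in> set vs" for z
      using that walk_subset_component[of G vs es] P component_eq[OF a] component_subgraph[OF sub]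
      unfolding geodesic_def by blast
    show "length vs + K \<le> card ?C"
    proof (cases "reach ?H (hd vs) (last vs)")
      case True
      then show ?thesis by (rule slack_at_subgraph_reach_bound[OF sub fin x P a])
    next
      case False
      then obtain vs1 vs2 es1 es2 where split: "vs = vs1 @ vs2"
        "geodesic ?H vs1 es1" "geodesic ?H vs2 es2" "component ?H (hd vs1) \<noteq> component ?H (hd vs2)"
        by (rule geodesic_split_delete_edge[OF P])
      have ne: "vs1 \<noteq> []" "vs2 \<noteq> []"
        using split(2,3) walk_not_Nil unfolding geodesic_def by blast+
      have "length vs1 + length vs2 + K \<le>
          card (component ?H x \<union> component ?H (hd vs1) \<union> component ?H (hd vs2))"
        using slack_at_two_geodesics_bound[OF _ x split(2-4)] fin by simp
      also have "\<dots> \<le> card ?C"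
        using in_C split(1) ne component_subgraph[OF sub self_in_component[of x G]] x(1)
        by (intro card_mono finite_component[OF fin]) auto
      finally show ?thesis using split(1) by simp
    qed
  qed
  with x show ?thesis unfolding has_slack_def by auto
qed

lemma count_list_distinct: "distinct xs \<Longrightarrow> count_list xs x = (if x \<in> set xs then 1 else 0)"
  by (induction xs) auto

lemma card_2_image_eq_doubleton:
  assumes "card A = 2" "g ` A = {x, y}"
  obtains p q where "A = {p, q}" "g p = x" "g q = y"
proof -
  obtain p q where A: "A = {p, q}" using assms(1) by (meson card_2_iff)
  then have "{g p, g q} = {x, y}" using assms(2) by simp
  then have "(g p = x \<and> g q = y) \<or> (g p = y \<and> g q = x)" by (simp add: doubleton_eq_iff)
  then show thesis using that A by (metis insert_commute)
qed

definition merge :: "'v \<Rightarrow> 'v \<Rightarrow> 'v \<Rightarrow> 'v" where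
  "merge u v w = (if w = v then u else w)"

definition contract :: "('v, 'e) mgraph \<Rightarrow> 'e \<Rightarrow> 'v \<Rightarrow> 'v \<Rightarrow> ('v, 'e) mgraph" where
  "contract G e u v = (verts G - {v}, edges G - {e}, \<lambda>f. merge u v ` endpts G f)"

lemma contract_simps [simp]:
  "verts (contract G e u v) = verts G - {v}" "edges (contract G e u v) = edges G - {e}"
  "endpts (contract G e u v) f = merge u v ` endpts G f"
  by (simp_all add: contract_def)

lemma reach_contract_edge:
  assumes u: "u \<in> verts G" "u \<noteq> v" and e: "endpts G e = {u, v}"
    and f: "f \<in> edges G" "endpts G f = {x, y}" and xy: "x \<in> verts G" "y \<in> verts G"
  shows "reach (contract G e u v) (merge u v x) (merge u v y)"
proof (cases "f = e")
  case True
  then have "merge u v x = u" "merge u v y = u"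
    using e f(2) by (auto simp: merge_def doubleton_eq_iff)
  then show ?thesis using u by (simp add: reach_refl)
next
  case False
  then show ?thesis
    using f xy u by (intro reach_edge[of f]) (auto simp: merge_def)
qed

lemma walk_reach_contract:
  "walk G vs es \<Longrightarrow> u \<in> verts G \<Longrightarrow> u \<noteq> v \<Longrightarrow> endpts G e = {u, v} \<Longrightarrow>
   reach (contract G e u v) (merge u v (hd vs)) (merge u v (last vs))"
proof (induction G vs es rule: walk.induct)
  case (1 G x)
  then show ?case using reach_refl[of "merge u v x" "contract G e u v"] by (auto simp: merge_def)
next
  case (2 G x y vs f es)
  then have "reach (contract G e u v) (merge u v x) (merge u v y)"
    using walk_verts[of G "y # vs" es] by (intro reach_contract_edge) auto
  moreover have "reach (contract G e u v) (merge u v y) (merge u v (last (y # vs)))"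
    using 2 by simp
  ultimately have "reach (contract G e u v) (merge u v x) (merge u v (last (y # vs)))"
    by (rule reach_trans)
  then show ?case by simp
qed auto

lemma reach_contract:
  "reach G a b \<Longrightarrow> u \<in> verts G \<Longrightarrow> u \<noteq> v \<Longrightarrow> endpts G e = {u, v} \<Longrightarrow>
   reach (contract G e u v) (merge u v a) (merge u v b)"
  unfolding reach_def[of G] by (metis walk_reach_contract)

lemma walk_merge_class:
  assumes e: "e \<in> edges G" "endpts G e = {u, v}" and ap: "a \<in> verts G" "p \<in> verts G"
    and eq: "merge u v a = merge u v p"
  shows "\<exists>vs es. walk G vs es \<and> hd vs = a \<and> last vs = p \<and>
    length es \<le> count_list [merge u v a] u"
proof (cases "a = p")
  case True
  then show ?thesis using ap by (intro exI[of _ "[a]"] exI[of _ "[]"]) simp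
next
  case False
  then have "{a, p} = {u, v}" "merge u v a = u"
    using eq by (auto simp: merge_def split: if_splits)
  then show ?thesis using e ap by (intro exI[of _ "[a, p]"] exI[of _ "[e]"]) simp
qed

text \<open>Lifting a walk of the contracted graph may cost one extra traversal of \<open>e\<close> at each visit
  of the merged vertex \<open>u\<close>.\<close>

lemma walk_lift_contract:
  assumes wf: "wf_graph G" and e: "e \<in> edges G" "endpts G e = {u, v}"
  shows "walk (contract G e u v) ws fs \<Longrightarrow> a \<in> verts G \<Longrightarrow> b \<in> verts G \<Longrightarrow>
    merge u v a = hd ws \<Longrightarrow> merge u v b = last ws \<Longrightarrow>
    \<exists>vs es. walk G vs es \<and> hd vs = a \<and> last vs = b \<and> length es \<le> length fs + count_list ws u"
proof (induction ws arbitrary: fs a)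
  case (Cons x ws)
  note IH = Cons.IH and prems = Cons.prems
  show ?case
  proof (cases ws)
    case Nil
    with prems have "fs = []" "merge u v a = merge u v b" "merge u v a = x" by auto
    with walk_merge_class[OF e prems(2,3)] Nil show ?thesis by auto
  next
    case (Cons y ws')
    obtain f fs' where fs: "fs = f # fs'" using prems(1) Cons by (cases fs) auto
    have step: "f \<in> edges G" "merge u v ` endpts G f = {x, y}" "walk (contract G e u v) ws fs'"
      using prems(1) Cons fs by auto
    have "card (endpts G f) = 2" using wf step(1) unfolding wf_graph_def by blast
    then obtain p q where pq: "endpts G f = {p, q}" "merge u v p = x" "merge u v q = y"
      by (rule card_2_image_eq_doubleton[OF _ step(2)])
    have pqV: "p \<in> verts G" "q \<in> verts G" using wf step(1) pq(1) unfolding wf_graph_def by auto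
    obtain ls hs where L: "walk G ls hs" "hd ls = q" "last ls = b"
      "length hs \<le> length fs' + count_list ws u"
      using IH[OF step(3) pqV(2) prems(3)] pq(3) Cons prems(5) by auto
    obtain ks gs where K: "walk G ks gs" "hd ks = a" "last ks = p" "length gs \<le> count_list [x] u"
      using walk_merge_class[OF e prems(2) pqV(1)] pq(2) prems(4) by auto
    have "walk G (p # ls) (f # hs)" using L pqV step pq by (intro walk_Cons) auto
    then have "walk G (ks @ ls) (gs @ f # hs)" using walk_append[OF K(1)] K(3) by fastforce
    moreover have "hd (ks @ ls) = a" "last (ks @ ls) = b"
      using K(2) L(3) walk_not_Nil[OF K(1)] walk_not_Nil[OF L(1)] by auto
    moreover have "length (gs @ f # hs) \<le> length fs + count_list (x # ws) u"
      using K(4) L(4) fs by (cases "x = u") simp_all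
    ultimately show ?thesis by blast
  qed
qed simp

lemma geodesic_contract:
  assumes wf: "wf_graph G" and e: "e \<in> edges G" "endpts G e = {u, v}" "u \<noteq> v"
    and P: "geodesic G vs es"
  obtains ws fs where "geodesic (contract G e u v) ws fs" "hd ws = merge u v (hd vs)"
    "length vs \<le> length ws + count_list ws u"
proof -
  have w: "walk G vs es" "length es = gdist G (hd vs) (last vs)"
    using P unfolding geodesic_def by blast+
  have uV: "u \<in> verts G" using wf e unfolding wf_graph_def by auto
  have ab: "hd vs \<in> verts G" "last vs \<in> verts G"
    using walk_verts[OF w(1)] walk_not_Nil[OF w(1)] by auto
  obtain ws fs where Q: "geodesic (contract G e u v) ws fs" "hd ws = merge u v (hd vs)"
    "last ws = merge u v (last vs)"
    using walk_reach_contract[OF w(1) uV e(3,2)] by (rule geodesic_exists)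
  have wQ: "walk (contract G e u v) ws fs" using Q(1) unfolding geodesic_def by blast
  obtain ls hs where L: "walk G ls hs" "hd ls = hd vs" "last ls = last vs"
    "length hs \<le> length fs + count_list ws u"
    using walk_lift_contract[OF wf e(1,2) wQ ab] Q(2,3) by auto
  have "length es \<le> length fs + count_list ws u" using gdist_le[OF L(1)] L w(2) by simp
  then have "length vs \<le> length ws + count_list ws u"
    using walk_length[OF w(1)] walk_length[OF wQ] by simp
  with Q that show thesis by blast
qed

lemma component_contract_subset:
  assumes wf: "wf_graph G" and e: "e \<in> edges G" "endpts G e = {u, v}"
    and x: "x \<in> verts (contract G e u v)"
  shows "component (contract G e u v) x \<subseteq> component G x"
proof
  fix y assume "y \<in> component (contract G e u v) x"
  then obtain ws fs where w: "walk (contract G e u v) ws fs" "hd ws = x" "last ws = y"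
    unfolding component_def reach_def by blast
  have y: "y \<in> verts (contract G e u v)"
    using walk_verts[OF w(1)] last_in_set[OF walk_not_Nil[OF w(1)]] w(3) by blast
  have "merge u v x = hd ws" "merge u v y = last ws" using x y w(2,3) by (auto simp: merge_def)
  moreover have "x \<in> verts G" "y \<in> verts G" using x y by auto
  ultimately obtain vs es where "walk G vs es" "hd vs = x" "last vs = y"
    using walk_lift_contract[OF wf e w(1), of x y] by blast
  then show "y \<in> component G x" unfolding component_def reach_def by blast
qed

lemma card_component_contract:
  assumes wf: "wf_graph G" and e: "e \<in> edges G" "endpts G e = {u, v}"
    and x: "x \<in> verts (contract G e u v)" and u: "u \<in> component (contract G e u v) x"
  shows "card (component (contract G e u v) x) < card (component G x)"
proof -
  let ?C = "component G x" and ?C' = "component (contract G e u v) x"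
  have fin: "finite (verts G)" and uv: "u \<in> verts G" "v \<in> verts G"
    using wf e unfolding wf_graph_def by auto
  have C'C: "?C' \<subseteq> ?C" by (rule component_contract_subset[OF wf e x])
  have "reach G x u" using u C'C unfolding component_def by blast
  then have "reach G x v" by (rule reach_trans[OF _ reach_edge[OF e uv]])
  moreover have "v \<notin> ?C'" using component_subset_verts[of "contract G e u v" x] by auto
  ultimately have "?C' \<subset> ?C" using C'C unfolding component_def by blast
  then show ?thesis by (rule psubset_card_mono[OF finite_component[OF fin]])
qed

lemma has_slack_contract:
  assumes wf: "wf_graph G" and e: "e \<in> edges G" "endpts G e = {u, v}" "u \<noteq> v"
    and slack: "has_slack K (contract G e u v)"
  shows "has_slack K G"
proof -
  let ?H = "contract G e u v"
  have fin: "finite (verts G)" and u: "u \<in> verts G" using wf e unfolding wf_graph_def by auto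
  obtain x where x: "x \<in> verts ?H" "slack_at K ?H x" using slack unfolding has_slack_def by blast
  let ?C = "component G x" and ?C' = "component ?H x"
  have C'C: "?C' \<subseteq> ?C" using component_contract_subset[OF wf e(1,2) x(1)] .
  have "slack_at K G x"
  proof (rule slack_atI)
    fix vs es assume P: "geodesic G vs es" and a: "hd vs \<in> ?C"
    obtain ws fs where Q: "geodesic ?H ws fs" "hd ws = merge u v (hd vs)"
      "length vs \<le> length ws + count_list ws u"
      by (rule geodesic_contract[OF wf e P])
    have "reach ?H (merge u v x) (merge u v (hd vs))"
      using a reach_contract[OF _ u e(3,2)] unfolding component_def by simp
    then have Q': "hd ws \<in> ?C'" using x(1) Q(2) unfolding component_def by (simp add: merge_def)
    have ws: "set ws \<subseteq> ?C'" "distinct ws"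
      using walk_subset_component[of ?H ws fs] component_eq[OF Q'] Q(1)
      unfolding geodesic_def by simp_all
    have "count_list ws u + card ?C' \<le> card ?C"
    proof (cases "u \<in> set ws")
      case True
      then have "card ?C' < card ?C"
        using ws(1) by (intro card_component_contract[OF wf e(1,2) x(1)]) blast
      then show ?thesis using True ws(2) by (simp add: count_list_distinct)
    next
      case False
      then show ?thesis using card_mono[OF finite_component[OF fin] C'C] by simp
    qed
    then show "length vs + K \<le> card ?C" using Q(3) slack_atD[OF x(2) Q(1) Q'] by linarith
  qed
  with x(1) show ?thesis unfolding has_slack_def by auto
qed

lemma has_slack_minor_step:
  assumes wf: "wf_graph G" and step: "minor_step G H" and slack: "has_slack K H"
  shows "has_slack K G"
proof -
  have fin: "finite (verts G)" using wf by (simp add: wf_graph_def)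
  from step consider
      (vertex) x where "\<forall>e\<in>edges G. x \<notin> endpts G e" "H = (verts G - {x}, edges G, endpts G)"
    | (edge) e where "H = (verts G, edges G - {e}, endpts G)"
    | (contraction) e u v where "e \<in> edges G" "endpts G e = {u, v}" "u \<noteq> v"
        "H = contract G e u v"
    unfolding minor_step_def contract_def merge_def by blast
  then show ?thesis
  proof cases
    case vertex
    then show ?thesis using has_slack_delete_vertex[OF fin] slack by simp
  next
    case edge
    then show ?thesis using has_slack_delete_edge[OF fin] slack by simp
  next
    case contraction
    then show ?thesis using has_slack_contract[OF wf] slack by simp
  qed
qed

lemma has_slack_minor_chain:
  assumes "(\<lambda>A B. minor_step A B \<and> wf_graph B)\<^sup>*\<^sup>* G H" "wf_graph G" "has_slack K H"
  shows "has_slack K G"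
  using assms
proof (induction rule: converse_rtranclp_induct)
  case (step G G')
  then show ?case by (meson has_slack_minor_step)
qed simp

definition iso_maps :: "('v, 'e) mgraph \<Rightarrow> ('w, 'f) mgraph \<Rightarrow> ('v \<Rightarrow> 'w) \<Rightarrow> ('e \<Rightarrow> 'f) \<Rightarrow> bool"
  where "iso_maps G H \<phi> \<psi> \<longleftrightarrow> bij_betw \<phi> (verts G) (verts H) \<and> bij_betw \<psi> (edges G) (edges H) \<and>
     (\<forall>e\<in>edges G. endpts H (\<psi> e) = \<phi> ` endpts G e)"

lemma graph_iso_iff: "graph_iso G H \<longleftrightarrow> (\<exists>\<phi> \<psi>. iso_maps G H \<phi> \<psi>)"
  unfolding graph_iso_def iso_maps_def ..

lemma walk_iso: "iso_maps G H \<phi> \<psi> \<Longrightarrow> walk G vs es \<Longrightarrow> walk H (map \<phi> vs) (map \<psi> es)"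
  by (induction G vs es rule: walk.induct) (auto simp: iso_maps_def bij_betw_def)

lemma reach_iso: "iso_maps G H \<phi> \<psi> \<Longrightarrow> reach G x y \<Longrightarrow> reach H (\<phi> x) (\<phi> y)"
  unfolding reach_def by (metis walk_iso walk_not_Nil hd_map last_map)

lemma gdist_iso_le:
  assumes i: "iso_maps G H \<phi> \<psi>" and r: "reach G x y"
  shows "gdist H (\<phi> x) (\<phi> y) \<le> gdist G x y"
proof -
  obtain vs es where w: "walk G vs es" "hd vs = x" "last vs = y" "length es = gdist G x y"
    using r by (rule shortest_walk_exists)
  show ?thesis
    using gdist_le[OF walk_iso[OF i w(1)]] w walk_not_Nil[OF w(1)] by (simp add: hd_map last_map)
qed

lemma iso_maps_inv:
  assumes wf: "wf_graph G" and i: "iso_maps G H \<phi> \<psi>"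
  shows "iso_maps H G (inv_into (verts G) \<phi>) (inv_into (edges G) \<psi>)"
proof -
  have b: "bij_betw \<phi> (verts G) (verts H)" "bij_betw \<psi> (edges G) (edges H)"
    and en: "\<forall>e\<in>edges G. endpts H (\<psi> e) = \<phi> ` endpts G e"
    using i unfolding iso_maps_def by blast+
  have "endpts G (inv_into (edges G) \<psi> f) = inv_into (verts G) \<phi> ` endpts H f"
    if f: "f \<in> edges H" for f
  proof -
    let ?e = "inv_into (edges G) \<psi> f"
    have e: "?e \<in> edges G" "\<psi> ?e = f"
      using f b(2) by (auto simp: bij_betw_def inv_into_into f_inv_into_f)
    have "endpts G ?e \<subseteq> verts G" using wf e(1) unfolding wf_graph_def by blast
    then show ?thesis
      using en e b(1) by (metis bij_betw_def inv_into_image_cancel)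
  qed
  then show ?thesis
    unfolding iso_maps_def using bij_betw_inv_into[OF b(1)] bij_betw_inv_into[OF b(2)] by blast
qed

lemma wf_graph_iso:
  assumes wf: "wf_graph G" and i: "iso_maps G H \<phi> \<psi>"
  shows "wf_graph H"
proof -
  have b: "bij_betw \<phi> (verts G) (verts H)" "bij_betw \<psi> (edges G) (edges H)"
    and en: "\<forall>e\<in>edges G. endpts H (\<psi> e) = \<phi> ` endpts G e"
    using i unfolding iso_maps_def by blast+
  have "endpts H f \<subseteq> verts H \<and> card (endpts H f) = 2" if f: "f \<in> edges H" for f
  proof -
    obtain e where e: "e \<in> edges G" "f = \<psi> e" using f b(2) by (auto simp: bij_betw_def)
    have "endpts G e \<subseteq> verts G" "card (endpts G e) = 2" using wf e(1) unfolding wf_graph_def by blast+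
    moreover have "inj_on \<phi> (endpts G e)" using b(1) calculation(1) by (auto simp: bij_betw_def intro: inj_on_subset)
    moreover have "\<phi> ` endpts G e \<subseteq> verts H" using calculation(1) bij_betwE[OF b(1)] by blast
    ultimately show ?thesis using en e by (simp add: card_image)
  qed
  moreover have "finite (verts H)" "verts H \<noteq> {}" "finite (edges H)"
    using wf b bij_betw_finite[OF b(1)] bij_betw_finite[OF b(2)] unfolding wf_graph_def
    by (auto simp: bij_betw_def)
  ultimately show ?thesis unfolding wf_graph_def by blast
qed

lemma is_usp_iso:
  assumes wf: "wf_graph G" and i: "iso_maps G H \<phi> \<psi>" and u: "is_usp G vs es"
  shows "is_usp H (map \<phi> vs) (map \<psi> es)"
proof -
  let ?\<phi>' = "inv_into (verts G) \<phi>" and ?\<psi>' = "inv_into (edges G) \<psi>"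
  have i': "iso_maps H G ?\<phi>' ?\<psi>'" by (rule iso_maps_inv[OF wf i])
  have b: "bij_betw \<phi> (verts G) (verts H)" "bij_betw \<psi> (edges G) (edges H)"
    using i unfolding iso_maps_def by blast+
  have w: "walk G vs es" "distinct vs" using u unfolding is_usp_iff by blast+
  have sv: "set vs \<subseteq> verts G" "vs \<noteq> []" using walk_verts[OF w(1)] walk_not_Nil[OF w(1)] by auto
  then have hl: "hd vs \<in> verts G" "last vs \<in> verts G" by auto
  show ?thesis unfolding is_usp_iff
  proof (intro conjI allI impI)
    show "walk H (map \<phi> vs) (map \<psi> es)" by (rule walk_iso[OF i w(1)])
    show "distinct (map \<phi> vs)"
      using w(2) sv(1) b(1) by (auto simp: distinct_map bij_betw_def intro: inj_on_subset)
    fix vs' es'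
    assume a: "walk H vs' es' \<and> distinct vs' \<and> hd vs' = hd (map \<phi> vs) \<and>
      last vs' = last (map \<phi> vs) \<and> length vs' \<le> length (map \<phi> vs)"
    have sv': "set vs' \<subseteq> verts H" "set es' \<subseteq> edges H" "vs' \<noteq> []"
      using a walk_verts walk_edges walk_not_Nil by blast+
    have "map ?\<phi>' vs' = vs \<and> map ?\<psi>' es' = es"
    proof (rule u[unfolded is_usp_iff, THEN conjunct2, THEN conjunct2, rule_format], intro conjI)
      show "walk G (map ?\<phi>' vs') (map ?\<psi>' es')" using walk_iso[OF i'] a by blast
      show "distinct (map ?\<phi>' vs')"
        using a sv'(1) bij_betw_inv_into[OF b(1)]
        by (auto simp: distinct_map bij_betw_def intro: inj_on_subset)
      show "hd (map ?\<phi>' vs') = hd vs" "last (map ?\<phi>' vs') = last vs"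
        using a sv(2) sv' hl b(1) by (auto simp: hd_map last_map bij_betw_def)
      show "length (map ?\<phi>' vs') \<le> length vs" using a by simp
    qed
    moreover have "map \<phi> (map ?\<phi>' vs') = vs'" "map \<psi> (map ?\<psi>' es') = es'"
      using sv' b by (auto intro!: map_idI simp: bij_betw_def f_inv_into_f)
    ultimately show "vs' = map \<phi> vs" "es' = map \<psi> es" by auto
  qed
qed

lemma ex_nat_iso:
  assumes wf: "wf_graph G"
  shows "\<exists>(H :: (nat, nat) mgraph) \<phi> \<psi>. iso_maps G H \<phi> \<psi>"
proof -
  obtain \<phi> where \<phi>: "bij_betw \<phi> (verts G) {0..<card (verts G)}"
    using wf ex_bij_betw_finite_nat unfolding wf_graph_def by blast
  obtain \<psi> where \<psi>: "bij_betw \<psi> (edges G) {0..<card (edges G)}"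
    using wf ex_bij_betw_finite_nat unfolding wf_graph_def by blast
  let ?H = "({0..<card (verts G)}, {0..<card (edges G)},
    \<lambda>f. \<phi> ` endpts G (inv_into (edges G) \<psi> f))"
  have "iso_maps G ?H \<phi> \<psi>" unfolding iso_maps_def using \<phi> \<psi> by (simp add: bij_betw_inv_into_left)
  then show ?thesis by blast
qed

lemma finite_gdists:
  "finite (verts G) \<Longrightarrow> finite {gdist G u v | u v. u \<in> verts G \<and> v \<in> verts G}"
  using finite_image_set2[of "\<lambda>u. u \<in> verts G" "\<lambda>v. v \<in> verts G" "gdist G"] by simp

lemma gdist_le_diam:
  "finite (verts G) \<Longrightarrow> u \<in> verts G \<Longrightarrow> v \<in> verts G \<Longrightarrow> gdist G u v \<le> diam G"
  unfolding diam_def by (rule Max_ge[OF finite_gdists]) auto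

lemma diam_attained:
  assumes "finite (verts G)" "verts G \<noteq> {}"
  obtains u v where "u \<in> verts G" "v \<in> verts G" "diam G = gdist G u v"
proof -
  have "diam G \<in> {gdist G u v | u v. u \<in> verts G \<and> v \<in> verts G}"
    unfolding diam_def using assms by (intro Max_in finite_gdists) auto
  with that show thesis by auto
qed

lemma connected_graph_iff: "connected_graph G \<longleftrightarrow> (\<forall>u\<in>verts G. \<forall>v\<in>verts G. reach G u v)"
  unfolding connected_graph_def reach_def is_walk_iff_walk ..

lemma has_slack_iso_connected:
  assumes wf: "wf_graph G" and conn: "connected_graph G" and i: "iso_maps G H \<phi> \<psi>"
  shows "has_slack (card (verts G) - diam G - 1) H"
proof -
  have fin: "finite (verts G)" "verts G \<noteq> {}" using wf unfolding wf_graph_def by blast+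
  have b: "bij_betw \<phi> (verts G) (verts H)" using i unfolding iso_maps_def by blast
  have card: "card (verts H) = card (verts G)" using bij_betw_same_card[OF b] by simp
  have finH: "finite (verts H)" using bij_betw_finite[OF b] fin(1) by simp
  have close: "reach H a b \<and> gdist H a b \<le> diam G"
    if ab_in: "a \<in> verts H" "b \<in> verts H" for a b
  proof -
    have "a \<in> \<phi> ` verts G" "b \<in> \<phi> ` verts G"
      using ab_in bij_betw_imp_surj_on[OF b] by simp_all
    then obtain a0 b0 where ab: "a0 \<in> verts G" "b0 \<in> verts G" "a = \<phi> a0" "b = \<phi> b0"
      by blast
    then have "reach G a0 b0" using conn unfolding connected_graph_iff by blast
    then show ?thesis
      using reach_iso[OF i] gdist_iso_le[OF i] gdist_le_diam[OF fin(1) ab(1,2)] ab(3,4)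
      by (meson le_trans)
  qed
  obtain x where x: "x \<in> verts H" using fin(2) b by (auto simp: bij_betw_def)
  have comp: "component H x = verts H"
    using close x component_subset_verts[of H x] unfolding component_def by blast
  have "slack_at (card (verts G) - diam G - 1) H x"
  proof (rule slack_atI)
    fix vs es assume P: "geodesic H vs es"
    have w: "walk H vs es" "length es = gdist H (hd vs) (last vs)"
      using P unfolding geodesic_def by blast+
    have "hd vs \<in> verts H" "last vs \<in> verts H"
      using walk_verts[OF w(1)] walk_not_Nil[OF w(1)] by auto
    then have "length vs \<le> diam G + 1" using close w walk_length[OF w(1)] by fastforce
    moreover have "length vs \<le> card (verts G)"
      using geodesic_length_le_card[OF finH P] component_subset_verts card_mono[OF finH] card
      by (metis le_trans)
    ultimately show "length vs + (card (verts G) - diam G - 1) \<le> card (component H x)"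
      unfolding comp card by arith
  qed
  with x show ?thesis unfolding has_slack_def by blast
qed

lemma has_cycle_iff:
  "has_cycle G \<longleftrightarrow> (\<exists>vs es e. walk G vs es \<and> distinct vs \<and> es \<noteq> [] \<and> e \<in> edges G \<and>
     e \<notin> set es \<and> endpts G e = {hd vs, last vs})"
  unfolding has_cycle_def is_path_def is_walk_iff_walk by (simp only: conj_assoc)

lemma has_cycleI:
  assumes e: "e \<in> edges G" "endpts G e = {hd vs, last vs}" "e \<notin> set es"
    and w: "walk G vs es" and ne: "hd vs \<noteq> last vs"
  shows "has_cycle G"
proof -
  obtain ps fs where p: "walk G ps fs" "distinct ps" "hd ps = hd vs" "last ps = last vs"
    "set fs \<subseteq> set es"
    using w by (rule walk_to_path)
  have "fs \<noteq> []"
  proof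
    assume "fs = []"
    then have "length ps = 1" using walk_length[OF p(1)] by simp
    then have "hd ps = last ps" by (cases ps) auto
    with p(3,4) ne show False by simp
  qed
  with p e show ?thesis unfolding has_cycle_iff by (intro exI[of _ ps] exI[of _ fs] exI[of _ e]) auto
qed

lemma has_cycle_two_exits:
  assumes w: "walk G (u # ws) (f # fs)" "walk G (u # ws') (f' # fs')"
    and u: "u \<notin> set ws" "u \<notin> set ws'" and last: "last ws = last ws'" and ff': "f \<noteq> f'"
  shows "has_cycle G"
proof -
  have ne: "ws \<noteq> []" "ws' \<noteq> []" using w by (cases ws; cases ws'; auto)+
  have w': "walk G ws' fs'" "f' \<in> edges G" "endpts G f' = {u, hd ws'}"
    using w(2) ne(2) by (cases ws'; simp)+
  let ?vs = "(u # ws) @ tl (rev ws')" and ?es = "(f # fs) @ rev fs'"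
  have ws: "walk G ws fs" using w(1) ne(1) by (cases ws) simp_all
  have "walk G ?vs ?es"
    using walk_append[OF w(1) walk_rev[OF w'(1)]] last ne by (simp add: hd_rev)
  moreover have "hd ?vs = u" "last ?vs = hd ws'"
    using hd_last_append_tl[of "u # ws" "rev ws'"] last ne by (simp_all add: hd_rev last_rev)
  moreover have "f' \<notin> set ?es"
    using ff' u w'(3) walk_endpts[OF w'(1), of f'] walk_endpts[OF ws, of f'] by auto
  moreover have "u \<noteq> hd ws'" using u(2) ne(2) by auto
  ultimately show ?thesis using w'(2,3) by (intro has_cycleI[of f' G ?vs ?es]) auto
qed

lemma acyclic_path_unique:
  assumes acyclic: "\<not> has_cycle G"
  shows "walk G vs es \<Longrightarrow> distinct vs \<Longrightarrow> walk G vs' es' \<Longrightarrow> distinct vs' \<Longrightarrow>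
    hd vs' = hd vs \<Longrightarrow> last vs' = last vs \<Longrightarrow> vs' = vs \<and> es' = es"
proof (induction vs arbitrary: es vs' es')
  case (Cons u ws)
  note prems = Cons.prems and IH = Cons.IH
  obtain ws' where vs': "vs' = u # ws'"
    using prems(3,5) walk_not_Nil by (cases vs') auto
  have u: "u \<notin> set ws" "u \<notin> set ws'" using prems(2,4) vs' by auto
  have last: "last (u # ws) = last (u # ws')" using prems(6) vs' by simp
  have Nil_iff: "ws = [] \<longleftrightarrow> ws' = []"
    using last u by (metis last_ConsL last_ConsR last_in_set)
  show ?case
  proof (cases ws)
    case Nil
    then show ?thesis
      using Nil_iff vs' walk_length[OF prems(1)] walk_length[OF prems(3)] by simp
  next
    case (Cons w r)
    obtain w' r' where ws': "ws' = w' # r'" using Nil_iff Cons by (cases ws') auto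
    obtain f fs f' fs' where es: "es = f # fs" "es' = f' # fs'"
      using prems(1,3) Cons ws' vs' by (cases es; cases es') auto
    have walks: "walk G (u # ws) (f # fs)" "walk G (u # ws') (f' # fs')"
      using prems(1,3) vs' es by simp_all
    have "f = f'"
    proof (rule ccontr)
      assume "f \<noteq> f'"
      moreover have "last ws = last ws'" using last Cons ws' by simp
      ultimately have "has_cycle G" by (rule has_cycle_two_exits[OF walks u, rotated])
      with acyclic show False ..
    qed
    then have "w' = w" using walks Cons ws' by (auto simp: doubleton_eq_iff)
    then have "ws' = ws \<and> fs' = fs"
      using IH[of fs ws' fs'] walks prems(2,4) vs' last Cons ws' by auto
    with vs' es \<open>f = f'\<close> show ?thesis by simp
  qed
qed simp

lemma tree_diameter_usp:
  assumes tree: "is_tree T"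
  shows "\<exists>vs es. is_usp T vs es \<and> length vs = diam T + 1"
proof -
  have wf: "wf_graph T" and conn: "connected_graph T" and acyclic: "\<not> has_cycle T"
    using tree unfolding is_tree_def by blast+
  have "finite (verts T)" "verts T \<noteq> {}" using wf unfolding wf_graph_def by blast+
  then obtain a b where ab: "a \<in> verts T" "b \<in> verts T" "diam T = gdist T a b"
    by (rule diam_attained)
  then have "reach T a b" using conn unfolding connected_graph_iff by blast
  then obtain vs es where P: "geodesic T vs es" "hd vs = a" "last vs = b"
    by (rule geodesic_exists)
  then have w: "walk T vs es" "distinct vs" "length es = diam T"
    using ab(3) unfolding geodesic_def by auto
  have "is_usp T vs es"
    unfolding is_usp_iff using w acyclic_path_unique[OF acyclic w(1,2)] by blast
  moreover have "length vs = diam T + 1" using walk_length[OF w(1)] w(3) by simp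
  ultimately show ?thesis by blast
qed

section \<open>The spectator floor of a tree\<close>

lemma sp_ge_tree_minor:
  assumes tree: "is_tree T" and wf: "wf_graph H" and minor: "is_minor T H"
  shows "card (verts T) - diam T - 1 \<le> sp H"
proof -
  obtain H' \<phi> \<psi> where chain: "(\<lambda>A B. minor_step A B \<and> wf_graph B)\<^sup>*\<^sup>* H H'"
    and iso: "iso_maps T H' \<phi> \<psi>"
    using minor unfolding is_minor_def graph_iso_iff by blast
  have "has_slack (card (verts T) - diam T - 1) H'"
    using has_slack_iso_connected[OF _ _ iso] tree unfolding is_tree_def by blast
  then show ?thesis using has_slack_le_sp[OF wf has_slack_minor_chain[OF chain wf]] by blast
qed

lemma tree_host:
  assumes tree: "is_tree T"
  shows "\<exists>H :: (nat, nat) mgraph. wf_graph H \<and> is_minor T H \<and>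
    sp H \<le> card (verts T) - diam T - 1"
proof -
  have wf: "wf_graph T" using tree unfolding is_tree_def by blast
  obtain H :: "(nat, nat) mgraph" and \<phi> \<psi> where iso: "iso_maps T H \<phi> \<psi>"
    using ex_nat_iso[OF wf] by blast
  have wfH: "wf_graph H" by (rule wf_graph_iso[OF wf iso])
  have minor: "is_minor T H" unfolding is_minor_def graph_iso_iff using iso by blast
  obtain vs es where u: "is_usp T vs es" "length vs = diam T + 1"
    using tree_diameter_usp[OF tree] by blast
  have "diam T + 1 \<le> usp H" using usp_ge[OF wfH is_usp_iso[OF wf iso u(1)]] u(2) by simp
  moreover have "card (verts H) = card (verts T)"
    using iso unfolding iso_maps_def by (metis bij_betw_same_card)
  ultimately have "sp H \<le> card (verts T) - diam T - 1" unfolding sp_def by simp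
  with wfH minor show ?thesis by blast
qed

theorem theorem4p2:
  fixes T :: "('v, 'e) mgraph"
  assumes "is_tree T"
  shows "spec_floor T = card (verts T) - diam T - 1"
proof -
  obtain H :: "(nat, nat) mgraph" where H: "wf_graph H" "is_minor T H"
    "sp H \<le> card (verts T) - diam T - 1"
    using tree_host[OF assms] by blast
  show ?thesis unfolding spec_floor_def
  proof (rule Least_equality)
    show "\<exists>H :: (nat, nat) mgraph. wf_graph H \<and> is_minor T H \<and> card (verts T) - diam T - 1 = sp H"
      using H sp_ge_tree_minor[OF assms H(1,2)] by (intro exI[of _ H]) simp
  next
    fix s assume "\<exists>H :: (nat, nat) mgraph. wf_graph H \<and> is_minor T H \<and> s = sp H"
    then show "card (verts T) - diam T - 1 \<le> s" using sp_ge_tree_minor[OF assms] by auto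
  qed
qed

end
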